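(* The following randomized mechanism for a multi-unit auction with $m$ identical items and bidder set $N$ is universally obviously strategy-proof. With probability $1/2$, bundle all $m$ items together and run an ascending-price auction on the grand bundle. With the remaining probability $1/2$: place each bidder independently in a set $S$ with probability $1/2$ and in a set $U$ otherwise; bidders in $S$ receive nothing, pay nothing, and report their valuations; compute the optimal welfare $O$ achievable by allocating the $m$ items among the bidders of $S$ only; then iterate over the bidders of $U$ in an arbitrary order, and let each purchase her preferred number of the remaining items at a price of $O/(10m)$ per item.
   Context: Each bidder $i$ has a private valuation $v_i:\{0,1,\dots,m\}\to\mathbb{R}_{\ge0}$ from a known domain, with quasi-linear utility. In the ascending-price auction on the grand bundle, a common price rises and bidders drop out when it becomes too high; the last remaining bidder wins all items at the current price, and others get nothing and pay nothing. A deterministic mechanism is a rooted tree: each internal node is assigned to one bidder, who sends one of the messages labeling the outgoing edges; each leaf is labeled with an allocation and payments. A behavior $B_i$ specifies a message at every node of bidder $i$; a profile $B$ determines a path $\mathrm{Path}(B)$ with allocation $f_i(B)$ and payment $p_i(B)$ for $i$. A strategy $\mathcal S_i$ maps each valuation to a behavior; it is obviously dominant if for every $v_i$, every node $u$ of $i$, every $B_{-i}$ and every profile $B'$ with $u\in\mathrm{Path}(\mathcal S_i(v_i),B_{-i})\cap\mathrm{Path}(B')$ and $B'_i$ sending at $u$ a message different from $\mathcal S_i(v_i)$'s, $v_i(f_i(\mathcal S_i(v_i),B_{-i}))-p_i(\mathcal S_i(v_i),B_{-i})\ge v_i(f_i(B'))-p_i(B')$. A randomized mechanism (distribution over deterministic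 mechanisms with strategies) is universally OSP if each mechanism in its support is OSP. *)

theory Defs
  imports "HOL-Probability.Product_PMF"
begin

text \<open>A node of a mechanism tree is either a leaf labelled with an allocation
(number of items per bidder) and payments, or an internal node assigned to a
bidder together with the set of messages labelling its outgoing edges.
Nodes are identified with their histories (the list of messages from the root).\<close>

datatype ('i, 'm) node = Leaf "'i \<Rightarrow> nat" "'i \<Rightarrow> real" | Inner 'i "'m set"

type_synonym ('i, 'm) mech = "'m list \<Rightarrow> ('i, 'm) node"

inductive in_tree :: "('i, 'm) mech \<Rightarrow> 'm list \<Rightarrow> bool" for M where
  root: "in_tree M []"
| child: "in_tree M h \<Longrightarrow> M h = Inner i A \<Longrightarrow> x \<in> A \<Longrightarrow> in_tree M (h @ [x])"

definition valid_beh :: "('i, 'm) mech \<Rightarrow> 'i \<Rightarrow> ('m list \<Rightarrow> 'm) \<Rightarrow> bool" where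
  "valid_beh M i B \<longleftrightarrow> (\<forall>h A. in_tree M h \<longrightarrow> M h = Inner i A \<longrightarrow> B h \<in> A)"

definition valid_profile :: "('i, 'm) mech \<Rightarrow> 'i set \<Rightarrow> ('i \<Rightarrow> 'm list \<Rightarrow> 'm) \<Rightarrow> bool" where
  "valid_profile M N B \<longleftrightarrow> (\<forall>j\<in>N. valid_beh M j (B j))"

primrec hist :: "('i, 'm) mech \<Rightarrow> ('i \<Rightarrow> 'm list \<Rightarrow> 'm) \<Rightarrow> nat \<Rightarrow> 'm list" where
  "hist M B 0 = []"
| "hist M B (Suc n) =
     (case M (hist M B n) of
        Leaf a p \<Rightarrow> hist M B n
      | Inner i A \<Rightarrow> hist M B n @ [B i (hist M B n)])"

definition path :: "('i, 'm) mech \<Rightarrow> ('i \<Rightarrow> 'm list \<Rightarrow> 'm) \<Rightarrow> 'm list set" where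
  "path M B = range (hist M B)"

definition is_leaf :: "('i, 'm) node \<Rightarrow> bool" where
  "is_leaf x = (case x of Leaf a p \<Rightarrow> True | Inner i A \<Rightarrow> False)"

text \<open>The leaf reached by a profile; an infinite path (possible in the ascending
auction if two bidders never drop out) is given the null outcome.\<close>
definition final_node :: "('i, 'm) mech \<Rightarrow> ('i \<Rightarrow> 'm list \<Rightarrow> 'm) \<Rightarrow> ('i, 'm) node" where
  "final_node M B =
     (if \<exists>n. is_leaf (M (hist M B n))
      then M (hist M B (LEAST n. is_leaf (M (hist M B n))))
      else Leaf (\<lambda>_. 0) (\<lambda>_. 0))"

definition alloc :: "('i, 'm) mech \<Rightarrow> ('i \<Rightarrow> 'm list \<Rightarrow> 'm) \<Rightarrow> 'i \<Rightarrow> nat" where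
  "alloc M B i = (case final_node M B of Leaf a p \<Rightarrow> a i | Inner j A \<Rightarrow> 0)"

definition pay :: "('i, 'm) mech \<Rightarrow> ('i \<Rightarrow> 'm list \<Rightarrow> 'm) \<Rightarrow> 'i \<Rightarrow> real" where
  "pay M B i = (case final_node M B of Leaf a p \<Rightarrow> p i | Inner j A \<Rightarrow> 0)"

definition utility :: "(nat \<Rightarrow> real) \<Rightarrow> ('i, 'm) mech \<Rightarrow> ('i \<Rightarrow> 'm list \<Rightarrow> 'm) \<Rightarrow> 'i \<Rightarrow> real" where
  "utility v M B i = v (alloc M B i) - pay M B i"

definition obviously_dominant ::
  "('i, 'm) mech \<Rightarrow> 'i set \<Rightarrow> 'i \<Rightarrow> (nat \<Rightarrow> real) set \<Rightarrow> ((nat \<Rightarrow> real) \<Rightarrow> 'm list \<Rightarrow> 'm) \<Rightarrow> bool" where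
  "obviously_dominant M N i Di Si \<longleftrightarrow>
     (\<forall>v\<in>Di. \<forall>u A. M u = Inner i A \<longrightarrow>
        (\<forall>B B'. (\<forall>j\<in>N - {i}. valid_beh M j (B j)) \<longrightarrow> valid_profile M N B' \<longrightarrow>
           u \<in> path M (B(i := Si v)) \<longrightarrow> u \<in> path M B' \<longrightarrow> B' i u \<noteq> Si v u \<longrightarrow>
           utility v M B' i \<le> utility v M (B(i := Si v)) i))"

definition OSP :: "('i, 'm) mech \<Rightarrow> 'i set \<Rightarrow> ('i \<Rightarrow> (nat \<Rightarrow> real) set) \<Rightarrow> bool" where
  "OSP M N D \<longleftrightarrow>
     (\<exists>S. (\<forall>i\<in>N. \<forall>v\<in>D i. valid_beh M i (S i v)) \<and>
          (\<forall>i\<in>N. obviously_dominant M N i (D i) (S i)))"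

definition universally_OSP :: "('i, 'm) mech pmf \<Rightarrow> 'i set \<Rightarrow> ('i \<Rightarrow> (nat \<Rightarrow> real) set) \<Rightarrow> bool" where
  "universally_OSP P N D \<longleftrightarrow> (\<forall>M \<in> set_pmf P. OSP M N D)"

datatype ('i, 'm, 's) snode = SLeaf "'i \<Rightarrow> nat" "'i \<Rightarrow> real" | SAsk 'i "'m set" "'m \<Rightarrow> 's"

fun run_state :: "('s \<Rightarrow> ('i, 'm, 's) snode) \<Rightarrow> 's \<Rightarrow> 'm list \<Rightarrow> 's" where
  "run_state step s [] = s"
| "run_state step s (x # xs) =
     (case step s of SLeaf a p \<Rightarrow> s | SAsk i A nxt \<Rightarrow> run_state step (nxt x) xs)"

definition mech_of :: "('s \<Rightarrow> ('i, 'm, 's) snode) \<Rightarrow> 's \<Rightarrow> ('i, 'm) mech" where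
  "mech_of step s0 h =
     (case step (run_state step s0 h) of SLeaf a p \<Rightarrow> Leaf a p | SAsk i A nxt \<Rightarrow> Inner i A)"

datatype msg = Stay | Drop | Report "nat \<Rightarrow> real" | Buy nat

text \<open>Ascending-price auction on the grand bundle of m items, price increment eps.
State: (round k with current price k*eps, bidders still to be asked this round,
bidders that accepted the current price so far).\<close>

fun asc_step :: "nat \<Rightarrow> real \<Rightarrow> nat \<times> 'i list \<times> 'i list \<Rightarrow> ('i, msg, nat \<times> 'i list \<times> 'i list) snode" where
  "asc_step m eps (k, x # rest, st) =
     SAsk x {Stay, Drop} (\<lambda>c. (k, rest, if c = Stay then st @ [x] else st))"
| "asc_step m eps (k, [], []) = SLeaf (\<lambda>_. 0) (\<lambda>_. 0)"
| "asc_step m eps (k, [], [j]) =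
     SLeaf (\<lambda>i. if i = j then m else 0) (\<lambda>i. if i = j then real k * eps else 0)"
| "asc_step m eps (k, [], j # j' # js) =
     SAsk j {Stay, Drop} (\<lambda>c. (Suc k, j' # js, if c = Stay then [j] else []))"

definition asc_mech :: "'i set \<Rightarrow> nat \<Rightarrow> real \<Rightarrow> ('i set \<Rightarrow> 'i list) \<Rightarrow> ('i, msg) mech" where
  "asc_mech N m eps ord = mech_of (asc_step m eps) (0, ord N, [])"

definition opt_welfare :: "nat \<Rightarrow> 'i set \<Rightarrow> ('i \<Rightarrow> nat \<Rightarrow> real) \<Rightarrow> real" where
  "opt_welfare m S rep =
     Max {(\<Sum>i\<in>S. rep i (a i)) | a. (\<forall>i. i \<notin> S \<longrightarrow> a i = 0) \<and> (\<Sum>i\<in>S. a i) \<le> m}"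

definition report_of :: "msg \<Rightarrow> nat \<Rightarrow> real" where
  "report_of c = (case c of Report v \<Rightarrow> v | _ \<Rightarrow> (\<lambda>_. 0))"

definition bought_of :: "msg \<Rightarrow> nat" where
  "bought_of c = (case c of Buy k \<Rightarrow> k | _ \<Rightarrow> 0)"

text \<open>Second branch for a realized sample set S (U = N - S).  State:
(S-bidders still to report, reports, U-bidders still to buy, remaining items,
numbers bought).\<close>

fun pp_step :: "nat \<Rightarrow> ('i \<Rightarrow> (nat \<Rightarrow> real) set) \<Rightarrow> 'i set \<Rightarrow>
    'i list \<times> ('i \<Rightarrow> nat \<Rightarrow> real) \<times> 'i list \<times> nat \<times> ('i \<Rightarrow> nat) \<Rightarrow>
    ('i, msg, 'i list \<times> ('i \<Rightarrow> nat \<Rightarrow> real) \<times> 'i list \<times> nat \<times> ('i \<Rightarrow> nat)) snode" where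
  "pp_step m D S (x # rs, rep, us, r, b) =
     SAsk x (Report ` D x) (\<lambda>c. (rs, rep(x := report_of c), us, r, b))"
| "pp_step m D S ([], rep, y # us, r, b) =
     SAsk y (Buy ` {0..r}) (\<lambda>c. ([], rep, us, r - bought_of c, b(y := bought_of c)))"
| "pp_step m D S ([], rep, [], r, b) =
     SLeaf b (\<lambda>i. real (b i) * (opt_welfare m S rep / (10 * real m)))"

definition pp_mech :: "'i set \<Rightarrow> nat \<Rightarrow> ('i \<Rightarrow> (nat \<Rightarrow> real) set) \<Rightarrow> ('i set \<Rightarrow> 'i list) \<Rightarrow> 'i set \<Rightarrow> ('i, msg) mech" where
  "pp_mech N m D ord S = mech_of (pp_step m D S) (ord S, (\<lambda>_ _. 0), ord (N - S), m, (\<lambda>_. 0))"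

definition rand_mech :: "'i set \<Rightarrow> nat \<Rightarrow> ('i \<Rightarrow> (nat \<Rightarrow> real) set) \<Rightarrow> real \<Rightarrow> ('i set \<Rightarrow> 'i list) \<Rightarrow> ('i, msg) mech pmf" where
  "rand_mech N m D eps ord =
     bind_pmf (bernoulli_pmf (1/2)) (\<lambda>b.
       if b then return_pmf (asc_mech N m eps ord)
       else map_pmf (\<lambda>c. pp_mech N m D ord {i\<in>N. c i}) (Pi_pmf N False (\<lambda>_. bernoulli_pmf (1/2))))"

end

theory Submission
  imports Defs
begin

text \<open>
  In the ascending auction, a bidder with valuation v stays exactly when winning the bundle at
  the price she commits to is no worse than losing, i.e. v m - price \<ge> v 0.  Following this
  rule always yields at least v 0.  At a node where the rule says drop, every continuation gives
  her either nothing or the bundle at a price at least as high, hence at most v 0; at a node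
  where it says stay, deviating removes her from the auction and yields exactly v 0.  In the
  posted-price branch the sampled bidders never get anything, so all their behaviours are
  equivalent.  A buyer's price is fixed by the reports of the sample before she is asked and her
  utility depends only on her own purchase, so buying a utility-maximising number of the
  remaining items beats every deviation.
\<close>

lemma arg_max_on_finite:
  fixes f :: "'a \<Rightarrow> 'b::linorder"
  assumes "finite S" "S \<noteq> {}"
  shows "arg_max_on f S \<in> S" and "x \<in> S \<Longrightarrow> f x \<le> f (arg_max_on f S)"
proof -
  have "Max (f ` S) \<in> f ` S"
    using assms by simp
  then obtain x0 where x0: "x0 \<in> S" "f x0 = Max (f ` S)"
    by auto
  have le_x0: "f y \<le> f x0" if "y \<in> S" for y
    using x0(2) Max_ge[of "f ` S" "f y"] assms(1) that by simp
  have "arg_max_on f S \<in> S \<and> (\<forall>y\<in>S. f y \<le> f (arg_max_on f S))"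
    unfolding arg_max_on_def
    by (rule arg_maxI[where x = x0]) (use x0(1) le_x0 in \<open>auto simp: not_less intro: order.trans\<close>)
  then show "arg_max_on f S \<in> S" and "x \<in> S \<Longrightarrow> f x \<le> f (arg_max_on f S)" by auto
qed

section \<open>Runs of mechanisms given by state machines\<close>

definition state_at :: "('s \<Rightarrow> ('i, 'm, 's) snode) \<Rightarrow> 's \<Rightarrow> ('i \<Rightarrow> 'm list \<Rightarrow> 'm) \<Rightarrow> nat \<Rightarrow> 's" where
  "state_at step s0 B n = run_state step s0 (hist (mech_of step s0) B n)"

lemma run_state_snoc:
  "run_state step s (h @ [x]) =
     (case step (run_state step s h) of SLeaf a p \<Rightarrow> run_state step s h | SAsk j A nxt \<Rightarrow> nxt x)"
  by (induction h arbitrary: s) (auto split: snode.split)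

lemma mech_of_eq_Inner_iff:
  "mech_of step s0 h = Inner i A \<longleftrightarrow> (\<exists>nxt. step (run_state step s0 h) = SAsk i A nxt)"
  by (auto simp: mech_of_def split: snode.split)

lemma state_at_0 [simp]: "state_at step s0 B 0 = s0"
  by (simp add: state_at_def)

lemma hist_Suc_SAsk:
  "step (state_at step s0 B n) = SAsk j A nxt \<Longrightarrow>
   hist (mech_of step s0) B (Suc n) = hist (mech_of step s0) B n @ [B j (hist (mech_of step s0) B n)]"
  by (simp add: state_at_def mech_of_def)

lemma hist_Suc_SLeaf:
  "step (state_at step s0 B n) = SLeaf a p \<Longrightarrow> hist (mech_of step s0) B (Suc n) = hist (mech_of step s0) B n"
  by (simp add: state_at_def mech_of_def)

lemma state_at_Suc_SAsk:
  assumes "step (state_at step s0 B n) = SAsk j A nxt"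
  shows "state_at step s0 B (Suc n) = nxt (B j (hist (mech_of step s0) B n))"
  using assms hist_Suc_SAsk[of step s0 B n j A nxt, OF assms] by (simp add: state_at_def run_state_snoc)

lemma state_at_Suc_SLeaf:
  "step (state_at step s0 B n) = SLeaf a p \<Longrightarrow> state_at step s0 B (Suc n) = state_at step s0 B n"
  by (metis hist_Suc_SLeaf state_at_def)

lemma state_at_Suc_node:
  assumes "hist (mech_of step s0) B n = u" and "step (run_state step s0 u) = SAsk i A nxt"
  shows "state_at step s0 B (Suc n) = nxt (B i u)"
  using assms state_at_Suc_SAsk[of step s0 B n i A nxt] by (simp add: state_at_def)

lemma state_at_Suc_invariant:
  assumes "\<And>s j A nxt c. step s = SAsk j A nxt \<Longrightarrow> P s \<Longrightarrow> P (nxt c)"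
    and "P (state_at step s0 B n)"
  shows "P (state_at step s0 B (Suc n))"
proof (cases "step (state_at step s0 B n)")
  case (SLeaf a p)
  then show ?thesis using assms(2) by (simp add: state_at_Suc_SLeaf)
next
  case (SAsk j A nxt)
  then show ?thesis using assms by (simp add: state_at_Suc_SAsk)
qed

lemma state_at_invariant:
  assumes "\<And>s j A nxt c. step s = SAsk j A nxt \<Longrightarrow> P s \<Longrightarrow> P (nxt c)" and "P s0"
  shows "P (state_at step s0 B n)"
proof (induction n)
  case (Suc n)
  from assms(1) Suc.IH show ?case by (rule state_at_Suc_invariant)
qed (simp add: assms(2))

lemma hist_stays_at_SLeaf:
  assumes "step (state_at step s0 B n) = SLeaf a p" and "n \<le> n'"
  shows "hist (mech_of step s0) B n' = hist (mech_of step s0) B n"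
  using assms(2)
proof (induction n' rule: dec_induct)
  case (step k)
  then have "step (state_at step s0 B k) = SLeaf a p"
    using assms(1) by (simp add: state_at_def)
  then show ?case using step.IH hist_Suc_SLeaf by metis
qed simp

lemma final_node_mech_of_SLeaf:
  assumes "step (state_at step s0 B n) = SLeaf a p"
  shows "final_node (mech_of step s0) B = Leaf a p"
proof -
  let ?M = "mech_of step s0"
  have leaf_n: "?M (hist ?M B n) = Leaf a p"
    using assms by (simp add: mech_of_def state_at_def)
  then have ex: "\<exists>n. is_leaf (?M (hist ?M B n))"
    by (intro exI[of _ n]) (simp add: is_leaf_def)
  define n' where "n' = (LEAST n. is_leaf (?M (hist ?M B n)))"
  have "is_leaf (?M (hist ?M B n'))" and "n' \<le> n"
    unfolding n'_def using ex leaf_n by (auto intro: LeastI_ex Least_le simp: is_leaf_def)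
  then obtain a' p' where "step (state_at step s0 B n') = SLeaf a' p'"
    by (auto simp: is_leaf_def mech_of_def state_at_def split: node.splits snode.splits)
  then have "hist ?M B n = hist ?M B n'"
    using \<open>n' \<le> n\<close> by (rule hist_stays_at_SLeaf)
  then have "?M (hist ?M B n') = Leaf a p"
    using leaf_n by simp
  then show ?thesis
    using ex unfolding final_node_def n'_def by simp
qed

lemma final_node_mech_of_nonterminating:
  assumes "\<And>n a p. step (state_at step s0 B n) \<noteq> SLeaf a p"
  shows "final_node (mech_of step s0) B = Leaf (\<lambda>_. 0) (\<lambda>_. 0)"
proof -
  have "\<not> is_leaf (mech_of step s0 (hist (mech_of step s0) B n))" for n
    using assms[of n] by (auto simp: is_leaf_def mech_of_def state_at_def split: snode.splits)
  then show ?thesis unfolding final_node_def by auto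
qed

lemma utility_mech_of_invariant:
  assumes start: "P (state_at step s0 B k)"
    and preserved: "\<And>n. k \<le> n \<Longrightarrow> P (state_at step s0 B n) \<Longrightarrow> P (state_at step s0 B (Suc n))"
    and at_leaf: "\<And>s a p. P s \<Longrightarrow> step s = SLeaf a p \<Longrightarrow> R (v (a i) - p i)"
    and nonterminating: "(\<And>n a p. step (state_at step s0 B n) \<noteq> SLeaf a p) \<Longrightarrow> R (v 0)"
  shows "R (utility v (mech_of step s0) B i)"
proof (cases "\<exists>n a p. step (state_at step s0 B n) = SLeaf a p")
  case True
  then obtain n a p where leaf: "step (state_at step s0 B n) = SLeaf a p" by blast
  have "P (state_at step s0 B l)" if "k \<le> l" for l
    using that by (induction l rule: dec_induct) (auto intro: start preserved)
  then have "P (state_at step s0 B (max n k))" by simp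
  moreover have "state_at step s0 B (max n k) = state_at step s0 B n"
    using hist_stays_at_SLeaf[of step s0 B n a p "max n k", OF leaf] by (simp add: state_at_def)
  ultimately have "R (v (a i) - p i)"
    using leaf by (auto intro: at_leaf)
  then show ?thesis
    using final_node_mech_of_SLeaf[of step s0 B n a p, OF leaf] by (simp add: utility_def alloc_def pay_def)
next
  case False
  then have "final_node (mech_of step s0) B = Leaf (\<lambda>_. 0) (\<lambda>_. 0)"
    by (intro final_node_mech_of_nonterminating) blast
  moreover have "R (v 0)"
    using False by (intro nonterminating) blast
  ultimately show ?thesis by (simp add: utility_def alloc_def pay_def)
qed

lemma utility_mech_of_step_invariant:
  assumes "P (state_at step s0 B k)"
    and "\<And>s j A nxt c. step s = SAsk j A nxt \<Longrightarrow> P s \<Longrightarrow> P (nxt c)"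
    and "\<And>s a p. P s \<Longrightarrow> step s = SLeaf a p \<Longrightarrow> R (v (a i) - p i)"
    and "(\<And>n a p. step (state_at step s0 B n) \<noteq> SLeaf a p) \<Longrightarrow> R (v 0)"
  shows "R (utility v (mech_of step s0) B i)"
proof (rule utility_mech_of_invariant[where P = P and R = R and k = k])
  fix n assume "P (state_at step s0 B n)"
  with assms(2) show "P (state_at step s0 B (Suc n))"
    by (rule state_at_Suc_invariant)
qed (use assms in auto)

lemma state_at_reaches_SLeaf:
  fixes \<mu> :: "'s \<Rightarrow> nat"
  assumes "\<And>s j A nxt c. step s = SAsk j A nxt \<Longrightarrow> \<mu> (nxt c) < \<mu> s"
  shows "\<exists>n a p. step (state_at step s0 B n) = SLeaf a p"
proof (rule ccontr)
  assume "\<not> ?thesis"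
  then have decreasing: "\<mu> (state_at step s0 B (Suc n)) < \<mu> (state_at step s0 B n)" for n
  proof (cases "step (state_at step s0 B n)")
    case (SAsk j A nxt)
    then show ?thesis
      using assms[OF SAsk] by (simp add: state_at_Suc_SAsk[of step s0 B n j A nxt, OF SAsk])
  qed blast
  have "\<mu> (state_at step s0 B n) + n \<le> \<mu> s0" for n
  proof (induction n)
    case (Suc n)
    then show ?case using decreasing[of n] by simp
  qed simp
  from this[of "Suc (\<mu> s0)"] show False by simp
qed

lemma in_tree_hist:
  assumes "valid_profile (mech_of step s0) N B"
    and "\<And>n j A nxt. step (state_at step s0 B n) = SAsk j A nxt \<Longrightarrow> j \<in> N"
  shows "in_tree (mech_of step s0) (hist (mech_of step s0) B n)"
proof (induction n)
  case 0
  show ?case by (simp add: in_tree.root)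
next
  case (Suc n)
  show ?case
  proof (cases "step (state_at step s0 B n)")
    case (SLeaf a p)
    show ?thesis
      unfolding hist_Suc_SLeaf[of step s0 B n a p, OF SLeaf] by (rule Suc.IH)
  next
    case (SAsk j A nxt)
    then have node: "mech_of step s0 (hist (mech_of step s0) B n) = Inner j A"
      by (simp add: mech_of_def state_at_def)
    moreover have "B j (hist (mech_of step s0) B n) \<in> A"
      using assms Suc.IH node SAsk by (auto simp: valid_profile_def valid_beh_def)
    ultimately show ?thesis
      unfolding hist_Suc_SAsk[of step s0 B n j A nxt, OF SAsk] by (rule in_tree.child[OF Suc.IH])
  qed
qed

section \<open>The ascending auction\<close>

type_synonym 'i asc_state = "nat \<times> 'i list \<times> 'i list"

text \<open>Answering Stay commits a bidder to the current price, or, once a round is over and the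
  first survivor is asked, to the price of the next round (prices in units of eps).\<close>

fun commit_price :: "'i asc_state \<Rightarrow> nat" where
  "commit_price (k, x # rest, st) = k"
| "commit_price (k, [], st) = Suc k"

fun active_bidders :: "'i asc_state \<Rightarrow> 'i list" where
  "active_bidders (k, todo, st) = todo @ st"

lemma asc_step_SAsk:
  "asc_step m eps s = SAsk j A nxt \<Longrightarrow> A = {Stay, Drop} \<and>
    ((\<exists>k rest st. s = (k, j # rest, st) \<and> nxt = (\<lambda>c. (k, rest, if c = Stay then st @ [j] else st))) \<or>
     (\<exists>k j' js. s = (k, [], j # j' # js) \<and> nxt = (\<lambda>c. (Suc k, j' # js, if c = Stay then [j] else []))))"
  by (induction m eps s rule: asc_step.induct) auto

lemma asc_step_SLeaf_utility:
  "asc_step m eps s = SLeaf a p \<Longrightarrow>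
    \<exists>k st. s = (k, [], st) \<and> v (a i) - p i = (if st = [i] then v m - real k * eps else v 0)"
  by (induction m eps s rule: asc_step.induct) auto

lemma fst_le_commit_price: "fst s \<le> commit_price s"
  by (cases s rule: commit_price.cases) auto

lemma asc_step_commit_price_le:
  "asc_step m eps s = SAsk j A nxt \<Longrightarrow> commit_price s \<le> fst (nxt c)"
  using asc_step_SAsk[of m eps s j A nxt] by auto

lemma asc_step_active_subset:
  "asc_step m eps s = SAsk j A nxt \<Longrightarrow> set (active_bidders (nxt c)) \<subseteq> set (active_bidders s)"
  using asc_step_SAsk[of m eps s j A nxt] by (auto split: if_splits)

lemma asc_step_distinct_active:
  "asc_step m eps s = SAsk j A nxt \<Longrightarrow> distinct (active_bidders s) \<Longrightarrow>
   distinct (active_bidders (nxt c))"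
  using asc_step_SAsk[of m eps s j A nxt] by auto

lemma asc_step_not_Stay_leaves:
  "asc_step m eps s = SAsk i A nxt \<Longrightarrow> distinct (active_bidders s) \<Longrightarrow> c \<noteq> Stay \<Longrightarrow>
   i \<notin> set (active_bidders (nxt c))"
  using asc_step_SAsk[of m eps s i A nxt] by auto

definition accepts_only_profitable :: "(nat \<Rightarrow> real) \<Rightarrow> nat \<Rightarrow> real \<Rightarrow> 'i \<Rightarrow> 'i asc_state \<Rightarrow> bool" where
  "accepts_only_profitable v m eps i s \<longleftrightarrow>
     (i \<in> set (snd (snd s)) \<longrightarrow> v 0 \<le> v m - real (fst s) * eps)"

lemma asc_step_accepts_only_profitable:
  assumes "asc_step m eps s = SAsk j A nxt" and "accepts_only_profitable v m eps i s"
    and "j = i \<Longrightarrow> c = Stay \<Longrightarrow> v 0 \<le> v m - real (commit_price s) * eps"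
  shows "accepts_only_profitable v m eps i (nxt c)"
  using asc_step_SAsk[OF assms(1)] assms(2,3) by (auto simp: accepts_only_profitable_def split: if_splits)

definition asc_strat :: "nat \<Rightarrow> real \<Rightarrow> 'i asc_state \<Rightarrow> (nat \<Rightarrow> real) \<Rightarrow> msg list \<Rightarrow> msg" where
  "asc_strat m eps s0 v h =
     (if v 0 \<le> v m - real (commit_price (run_state (asc_step m eps) s0 h)) * eps then Stay else Drop)"

lemma asc_strat_utility_ge:
  "v 0 \<le> utility v (mech_of (asc_step m eps) (k0, todo, [])) (B(i := asc_strat m eps (k0, todo, []) v)) i"
proof (rule utility_mech_of_invariant[where P = "accepts_only_profitable v m eps i" and k = 0
      and R = "\<lambda>x. v 0 \<le> x"])
  let ?step = "asc_step m eps" and ?s0 = "(k0, todo, [])"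
  let ?B = "B(i := asc_strat m eps ?s0 v)"
  fix n assume inv: "accepts_only_profitable v m eps i (state_at ?step ?s0 ?B n)"
  show "accepts_only_profitable v m eps i (state_at ?step ?s0 ?B (Suc n))"
  proof (cases "?step (state_at ?step ?s0 ?B n)")
    case (SLeaf a p)
    then show ?thesis using inv by (simp add: state_at_Suc_SLeaf)
  next
    case (SAsk j A nxt)
    have "accepts_only_profitable v m eps i (nxt (?B j (hist (mech_of ?step ?s0) ?B n)))"
      using SAsk inv
      by (rule asc_step_accepts_only_profitable) (auto simp: asc_strat_def state_at_def split: if_splits)
    then show ?thesis by (simp add: state_at_Suc_SAsk[of ?step ?s0 ?B n j A nxt, OF SAsk])
  qed
next
  fix s a p assume "accepts_only_profitable v m eps i s" "asc_step m eps s = SLeaf a p"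
  then show "v 0 \<le> v (a i) - p i"
    using asc_step_SLeaf_utility[of m eps s a p v i] by (auto simp: accepts_only_profitable_def)
qed (simp_all add: accepts_only_profitable_def)

lemma asc_utility_le_if_price_too_high:
  fixes i :: 'i
  assumes "0 \<le> eps" and reached: "hist (mech_of (asc_step m eps) s0) B n0 = u"
    and node: "asc_step m eps (run_state (asc_step m eps) s0 u) = SAsk i A nxt"
    and "v m - real (commit_price (run_state (asc_step m eps) s0 u)) * eps < v 0"
  shows "utility v (mech_of (asc_step m eps) s0) B i \<le> v 0"
proof -
  let ?k = "commit_price (run_state (asc_step m eps) s0 u)"
  show ?thesis
  proof (rule utility_mech_of_step_invariant[where P = "\<lambda>s. ?k \<le> fst s" and R = "\<lambda>x. x \<le> v 0"
        and k = "Suc n0"])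
    show "?k \<le> fst (state_at (asc_step m eps) s0 B (Suc n0))"
      using state_at_Suc_node[OF reached node] asc_step_commit_price_le[OF node] by simp
  next
    fix s j A nxt c assume "asc_step m eps s = SAsk j A nxt" "?k \<le> fst s"
    then show "?k \<le> fst (nxt c)"
      using asc_step_commit_price_le fst_le_commit_price order.trans by metis
  next
    fix s :: "'i asc_state" and a p assume "?k \<le> fst s" and leaf: "asc_step m eps s = SLeaf a p"
    then have "real ?k * eps \<le> real (fst s) * eps"
      using assms(1) by (simp add: mult_right_mono)
    then show "v (a i) - p i \<le> v 0"
      using asc_step_SLeaf_utility[of m eps s a p v i, OF leaf] assms(4) by auto
  qed simp
qed

lemma asc_utility_after_not_Stay:
  assumes "distinct (active_bidders s0)" and reached: "hist (mech_of (asc_step m eps) s0) B n0 = u"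
    and node: "asc_step m eps (run_state (asc_step m eps) s0 u) = SAsk i A nxt"
    and "B i u \<noteq> Stay"
  shows "utility v (mech_of (asc_step m eps) s0) B i = v 0"
proof (rule utility_mech_of_step_invariant[where P = "\<lambda>s. i \<notin> set (active_bidders s)"
      and R = "\<lambda>x. x = v 0" and k = "Suc n0"])
  have "distinct (active_bidders (state_at (asc_step m eps) s0 B n0))"
    using asc_step_distinct_active assms(1)
    by (rule state_at_invariant[where step = "asc_step m eps" and P = "\<lambda>s. distinct (active_bidders s)"])
  then have "distinct (active_bidders (run_state (asc_step m eps) s0 u))"
    using reached by (simp add: state_at_def)
  then show "i \<notin> set (active_bidders (state_at (asc_step m eps) s0 B (Suc n0)))"
    using state_at_Suc_node[OF reached node] asc_step_not_Stay_leaves[OF node _ assms(4)] by simp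
next
  fix s j A nxt c assume "asc_step m eps s = SAsk j A nxt" "i \<notin> set (active_bidders s)"
  then show "i \<notin> set (active_bidders (nxt c))"
    using asc_step_active_subset[of m eps s j A nxt c] by blast
next
  fix s a p assume "i \<notin> set (active_bidders s)" "asc_step m eps s = SLeaf a p"
  then show "v (a i) - p i = v 0"
    using asc_step_SLeaf_utility[of m eps s a p v i] by auto
qed simp

lemma OSP_asc:
  assumes "distinct todo" and "0 \<le> eps"
  shows "OSP (mech_of (asc_step m eps) (k0, todo, [])) N D"
  unfolding OSP_def
proof (intro exI[of _ "\<lambda>i. asc_strat m eps (k0, todo, [])"] conjI ballI)
  let ?s0 = "(k0, todo, [])" and ?M = "mech_of (asc_step m eps) (k0, todo, [])"
  fix i v
  show "valid_beh ?M i (asc_strat m eps ?s0 v)"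
    by (auto simp: valid_beh_def mech_of_eq_Inner_iff asc_strat_def dest!: asc_step_SAsk)
next
  let ?s0 = "(k0, todo, [])" and ?M = "mech_of (asc_step m eps) (k0, todo, [])"
  fix i
  show "obviously_dominant ?M N i (D i) (asc_strat m eps ?s0)"
    unfolding obviously_dominant_def
  proof (intro ballI allI impI)
    fix v u A B B'
    assume "?M u = Inner i A" and "u \<in> path ?M B'" and deviates: "B' i u \<noteq> asc_strat m eps ?s0 v u"
    then obtain nxt n0 where node: "asc_step m eps (run_state (asc_step m eps) ?s0 u) = SAsk i A nxt"
      and reached: "hist ?M B' n0 = u"
      by (auto simp: mech_of_eq_Inner_iff path_def)
    have "v 0 \<le> utility v ?M (B(i := asc_strat m eps ?s0 v)) i"
      by (rule asc_strat_utility_ge)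
    moreover have "utility v ?M B' i \<le> v 0"
    proof (cases "asc_strat m eps ?s0 v u = Stay")
      case True
      then show ?thesis
        using asc_utility_after_not_Stay[OF _ reached node, of v] deviates assms(1) by simp
    next
      case False
      then show ?thesis
        using asc_utility_le_if_price_too_high[OF assms(2) reached node]
        by (simp add: asc_strat_def split: if_splits)
    qed
    ultimately show "utility v ?M B' i \<le> utility v ?M (B(i := asc_strat m eps ?s0 v)) i"
      by linarith
  qed
qed

section \<open>The posted-price mechanism\<close>

type_synonym 'i pp_state = "'i list \<times> ('i \<Rightarrow> nat \<Rightarrow> real) \<times> 'i list \<times> nat \<times> ('i \<Rightarrow> nat)"

definition pp_state_wf :: "'i set \<Rightarrow> 'i set \<Rightarrow> 'i pp_state \<Rightarrow> bool" where
  "pp_state_wf N S s \<longleftrightarrow> (case s of (rs, rep, us, r, b) \<Rightarrow>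
     set rs \<subseteq> S \<and> set us \<subseteq> N - S \<and> distinct us \<and> (\<forall>j\<in>S. b j = 0))"

lemma pp_step_SAsk:
  "pp_step m D S s = SAsk j A nxt \<Longrightarrow>
    (\<exists>rs rep us r b. s = (j # rs, rep, us, r, b) \<and> A = Report ` D j \<and>
        nxt = (\<lambda>c. (rs, rep(j := report_of c), us, r, b))) \<or>
    (\<exists>rep us r b. s = ([], rep, j # us, r, b) \<and> A = Buy ` {0..r} \<and>
        nxt = (\<lambda>c. ([], rep, us, r - bought_of c, b(j := bought_of c))))"
  by (induction m D S s rule: pp_step.induct) auto

lemma pp_step_SLeaf:
  "pp_step m D S s = SLeaf a p \<Longrightarrow>
    \<exists>rep r b. s = ([], rep, [], r, b) \<and> a = b \<and> p = (\<lambda>i. real (b i) * (opt_welfare m S rep / (10 * real m)))"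
  by (induction m D S s rule: pp_step.induct) auto

lemma pp_step_wf:
  "pp_step m D S s = SAsk j A nxt \<Longrightarrow> pp_state_wf N S s \<Longrightarrow> pp_state_wf N S (nxt c)"
  using pp_step_SAsk[of m D S s j A nxt] by (auto simp: pp_state_wf_def)

lemma pp_step_SAsk_in:
  "pp_step m D S s = SAsk j A nxt \<Longrightarrow> pp_state_wf N S s \<Longrightarrow> S \<subseteq> N \<Longrightarrow> j \<in> N"
  using pp_step_SAsk[of m D S s j A nxt] by (auto simp: pp_state_wf_def)

lemma pp_step_reaches_SLeaf: "\<exists>n a p. pp_step m D S (state_at (pp_step m D S) s0 B n) = SLeaf a p"
  by (rule state_at_reaches_SLeaf[where \<mu> = "\<lambda>(rs, rep, us, r, b). length rs + length us"])
    (auto dest: pp_step_SAsk)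

lemma pp_utility_sampled:
  assumes "pp_state_wf N S s0" and "i \<in> S"
  shows "utility v (mech_of (pp_step m D S) s0) B i = v 0"
proof (rule utility_mech_of_step_invariant[where P = "pp_state_wf N S" and R = "\<lambda>x. x = v 0" and k = 0])
  fix s a p assume "pp_state_wf N S s" "pp_step m D S s = SLeaf a p"
  then show "v (a i) - p i = v 0"
    using assms(2) by (auto dest!: pp_step_SLeaf simp: pp_state_wf_def)
qed (use assms(1) pp_step_wf in auto)

lemma pp_utility_after_purchase:
  fixes i :: 'i
  assumes reached: "hist (mech_of (pp_step m D S) s0) B n0 = u"
    and "run_state (pp_step m D S) s0 u = ([], rep, i # us, r, b)" and "i \<notin> set us"
  shows "utility v (mech_of (pp_step m D S) s0) B i
    = v (bought_of (B i u)) - real (bought_of (B i u)) * (opt_welfare m S rep / (10 * real m))"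
proof -
  let ?k = "bought_of (B i u)"
  define bought_fixed where "bought_fixed s \<longleftrightarrow> (case s of (rs', rep', us', r', b') \<Rightarrow>
      rs' = [] \<and> rep' = rep \<and> i \<notin> set us' \<and> b' i = ?k)" for s :: "'i pp_state"
  have node: "pp_step m D S (run_state (pp_step m D S) s0 u)
      = SAsk i (Buy ` {0..r}) (\<lambda>c. ([], rep, us, r - bought_of c, b(i := bought_of c)))"
    using assms(2) by simp
  show ?thesis
  proof (rule utility_mech_of_step_invariant[where P = bought_fixed and k = "Suc n0"])
    show "bought_fixed (state_at (pp_step m D S) s0 B (Suc n0))"
      using state_at_Suc_node[OF reached node] assms(3) by (simp add: bought_fixed_def)
  next
    fix s j A nxt c assume "pp_step m D S s = SAsk j A nxt" "bought_fixed s"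
    then show "bought_fixed (nxt c)"
      by (auto simp: bought_fixed_def dest: pp_step_SAsk)
  next
    fix s a p assume "bought_fixed s" "pp_step m D S s = SLeaf a p"
    then show "v (a i) - p i = v ?k - real ?k * (opt_welfare m S rep / (10 * real m))"
      by (auto simp: bought_fixed_def dest!: pp_step_SLeaf)
  qed (use pp_step_reaches_SLeaf in blast)
qed

definition pp_strat :: "nat \<Rightarrow> ('i \<Rightarrow> (nat \<Rightarrow> real) set) \<Rightarrow> 'i set \<Rightarrow> 'i pp_state \<Rightarrow>
    (nat \<Rightarrow> real) \<Rightarrow> msg list \<Rightarrow> msg" where
  "pp_strat m D S s0 v h =
    (case run_state (pp_step m D S) s0 h of
      (rs, rep, us, r, b) \<Rightarrow>
        if rs = [] then Buy (arg_max_on (\<lambda>k. v k - real k * (opt_welfare m S rep / (10 * real m))) {0..r})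
        else Report v)"

lemma pp_state_wf_state_at:
  "pp_state_wf N S s0 \<Longrightarrow> pp_state_wf N S (state_at (pp_step m D S) s0 B n)"
  using pp_step_wf by (rule state_at_invariant[where step = "pp_step m D S" and P = "pp_state_wf N S"])

lemma pp_strat_utility_ge_at_purchase:
  assumes "S \<subseteq> N" and wf: "pp_state_wf N S s0" and "i \<in> N" "i \<notin> S"
    and valid: "valid_profile (mech_of (pp_step m D S) s0) N B'"
    and node: "mech_of (pp_step m D S) s0 u = Inner i A"
    and reached: "hist (mech_of (pp_step m D S) s0) (B(i := pp_strat m D S s0 v)) n = u"
      "hist (mech_of (pp_step m D S) s0) B' n' = u"
  shows "utility v (mech_of (pp_step m D S) s0) B' i
    \<le> utility v (mech_of (pp_step m D S) s0) (B(i := pp_strat m D S s0 v)) i"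
proof -
  let ?step = "pp_step m D S" and ?M = "mech_of (pp_step m D S) s0"
  have "pp_state_wf N S (run_state ?step s0 u)"
    using pp_state_wf_state_at[of N S s0 m D B' n', OF wf] reached(2) by (simp add: state_at_def)
  then obtain rep us r b where state: "run_state ?step s0 u = ([], rep, i # us, r, b)"
    and "i \<notin> set us" and A: "A = Buy ` {0..r}"
    using node \<open>i \<notin> S\<close> by (auto simp: pp_state_wf_def mech_of_eq_Inner_iff dest!: pp_step_SAsk)
  let ?f = "\<lambda>k. v k - real k * (opt_welfare m S rep / (10 * real m))"
  have "in_tree ?M u"
    unfolding reached(2)[symmetric] using valid
    by (rule in_tree_hist) (erule pp_step_SAsk_in[OF _ pp_state_wf_state_at[OF wf] assms(1)])
  then have "B' i u \<in> A"
    using valid \<open>i \<in> N\<close> node unfolding valid_profile_def valid_beh_def by blast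
  then obtain k where "B' i u = Buy k" "k \<le> r"
    using A by auto
  then have "utility v ?M B' i = ?f k"
    using pp_utility_after_purchase[OF reached(2) state \<open>i \<notin> set us\<close>] by (simp add: bought_of_def)
  also have "\<dots> \<le> ?f (arg_max_on ?f {0..r})"
    using \<open>k \<le> r\<close> by (intro arg_max_on_finite(2)) auto
  also have "\<dots> = utility v ?M (B(i := pp_strat m D S s0 v)) i"
    using pp_utility_after_purchase[OF reached(1) state \<open>i \<notin> set us\<close>] state
    by (simp add: pp_strat_def bought_of_def)
  finally show ?thesis .
qed

lemma OSP_pp:
  assumes "S \<subseteq> N" and wf: "pp_state_wf N S s0"
  shows "OSP (mech_of (pp_step m D S) s0) N D"
  unfolding OSP_def
proof (intro exI[of _ "\<lambda>i. pp_strat m D S s0"] conjI ballI)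
  fix i v assume "v \<in> D i"
  have "arg_max_on f {0..r} \<in> {0..r}" for f :: "nat \<Rightarrow> real" and r
    by (rule arg_max_on_finite) auto
  with \<open>v \<in> D i\<close> show "valid_beh (mech_of (pp_step m D S) s0) i (pp_strat m D S s0 v)"
    by (fastforce simp: valid_beh_def mech_of_eq_Inner_iff pp_strat_def dest!: pp_step_SAsk)
next
  let ?M = "mech_of (pp_step m D S) s0"
  fix i assume "i \<in> N"
  show "obviously_dominant ?M N i (D i) (pp_strat m D S s0)"
    unfolding obviously_dominant_def
  proof (intro ballI allI impI)
    fix v u A B B'
    assume "?M u = Inner i A" and "valid_profile ?M N B'"
      and "u \<in> path ?M (B(i := pp_strat m D S s0 v))" "u \<in> path ?M B'"
    then show "utility v ?M B' i \<le> utility v ?M (B(i := pp_strat m D S s0 v)) i"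
      using pp_strat_utility_ge_at_purchase[OF assms(1) wf \<open>i \<in> N\<close>] pp_utility_sampled[OF wf]
      by (cases "i \<in> S") (auto simp: path_def)
  qed
qed

lemma set_pmf_rand_mechE:
  assumes "M \<in> set_pmf (rand_mech N m D eps ord)"
  obtains "M = asc_mech N m eps ord" | S where "S \<subseteq> N" "M = pp_mech N m D ord S"
proof -
  from assms obtain b where M: "M \<in> set_pmf (if b then return_pmf (asc_mech N m eps ord)
      else map_pmf (\<lambda>c. pp_mech N m D ord {i\<in>N. c i}) (Pi_pmf N False (\<lambda>_. bernoulli_pmf (1/2))))"
    by (auto simp: rand_mech_def set_bind_pmf)
  show ?thesis
  proof (cases b)
    case True
    then show ?thesis using M that(1) by simp
  next
    case False
    with M obtain c where "M = pp_mech N m D ord {i\<in>N. c i}"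
      by auto
    then show ?thesis using that(2)[of "{i\<in>N. c i}"] by auto
  qed
qed

theorem lemma3p3:
  fixes N :: "'i set" and m :: nat and D :: "'i \<Rightarrow> (nat \<Rightarrow> real) set"
    and eps :: real and ord :: "'i set \<Rightarrow> 'i list"
  assumes "finite N"
    and "\<forall>i\<in>N. \<forall>v\<in>D i. \<forall>k\<le>m. v k \<ge> 0"
    and "eps > 0"
    and "\<forall>A\<subseteq>N. distinct (ord A) \<and> set (ord A) = A"
  shows "universally_OSP (rand_mech N m D eps ord) N D"
  unfolding universally_OSP_def
proof
  have ord: "distinct (ord A)" "set (ord A) = A" if "A \<subseteq> N" for A
    using assms(4) that by blast+
  fix M assume "M \<in> set_pmf (rand_mech N m D eps ord)"
  then show "OSP M N D"
  proof (cases rule: set_pmf_rand_mechE)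
    case 1
    then show ?thesis
      using OSP_asc[of "ord N" eps] ord(1)[of N] assms(3) by (simp add: asc_mech_def)
  next
    case (2 S)
    have "pp_state_wf N S (ord S, \<lambda>_ _. 0, ord (N - S), m, \<lambda>_. 0)"
      using ord[of S] ord[of "N - S"] \<open>S \<subseteq> N\<close> by (auto simp: pp_state_wf_def)
    then show ?thesis
      using OSP_pp[OF \<open>S \<subseteq> N\<close>] 2 by (simp add: pp_mech_def)
  qed
qed

end
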